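(* Let $\mathbb{F}$ be a finite field. For every $k\in\mathbb{N}$ there exists a CMSO formula $\mathrm{cc}(X,Z,\langle Y_1\rangle,\dots,\langle Y_k\rangle)$ over $\Sigma_{\mathbb{F}}$ such that for every matrix $A$ over $\mathbb{F}$, all sets $S\subseteq T$ of columns of $A$ and all virtual columns $\langle Q_1\rangle,\dots,\langle Q_k\rangle$ of $\mathcal{S}(A)$, we have $\mathcal{S}(A)\models\mathrm{cc}(S,T,\langle Q_1\rangle,\dots,\langle Q_k\rangle)$ if and only if $S$ is a connected component of the restriction $M(A,\{v(\langle Q_1\rangle),\dots,v(\langle Q_k\rangle)\})[T]$.
   Context: $\Sigma_{\mathbb{F}}$ has unary symbols $R,C$ and binary symbols $\mathrm{Entry}_\alpha$ ($\alpha\in\mathbb{F}$). For a matrix $A$ with rows $r_1,\dots,r_m$, $\mathcal{S}(A)$ has universe rows $\cup$ columns, $R$ = rows, $C$ = columns, $\mathrm{Entry}_\alpha=\{(r,c):A(r,c)=\alpha\}$. CMSO is monadic second-order logic with predicates $\mathrm{mod}_{a,b}(X)$ meaning $|X|\equiv a\pmod b$. A virtual column is a family $\langle Q\rangle=\{Q_\alpha\}_{\alpha\in\mathbb{F}}$ of pairwise disjoint sets of rows covering all rows, with vector $v(\langle Q\rangle)\in\mathbb{F}^m$ whose $i$-th coordinate is $\alpha$ where $r_i\in Q_\alpha$; in formulas it is an $\mathbb{F}$-indexed tuple of set variables. For $v_1,\dots,v_k\in\mathbb{F}^m$, $M(A,\{v_1,\dots,v_k\})$ is the matroid on the columns of $A$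 in which a set $\{u_1,\dots,u_\ell\}$ is dependent iff there exist $\alpha_i$, not all $0$, with $\sum_i\alpha_iu_i\in\mathrm{span}(v_1,\dots,v_k)$. $M[T]$ is the restriction to $T$; a connected component is an inclusion-wise maximal set any two elements of which lie in a common circuit. *)

theory Defs
  imports Main
begin

datatype ('f, 'x, 'v) cmso =
    AtR 'x
  | AtC 'x
  | AtEntry 'f 'x 'x
  | AtEq 'x 'x
  | AtMem 'x 'v
  | ModP nat nat 'v
  | Neg "('f, 'x, 'v) cmso"
  | Conj "('f, 'x, 'v) cmso" "('f, 'x, 'v) cmso"
  | ExFO 'x "('f, 'x, 'v) cmso"
  | ExSO 'v "('f, 'x, 'v) cmso"

record ('f, 'u) sstruct =
  univ :: "'u set"
  relR :: "'u set"
  relC :: "'u set"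
  relEntry :: "'f \<Rightarrow> ('u \<times> 'u) set"

fun sat :: "('f, 'u) sstruct \<Rightarrow> ('x \<Rightarrow> 'u) \<Rightarrow> ('v \<Rightarrow> 'u set) \<Rightarrow> ('f, 'x, 'v) cmso \<Rightarrow> bool" where
  "sat S fo so (AtR x) = (fo x \<in> relR S)"
| "sat S fo so (AtC x) = (fo x \<in> relC S)"
| "sat S fo so (AtEntry a x y) = ((fo x, fo y) \<in> relEntry S a)"
| "sat S fo so (AtEq x y) = (fo x = fo y)"
| "sat S fo so (AtMem x X) = (fo x \<in> so X)"
| "sat S fo so (ModP a b X) = (card (so X) mod b = a mod b)"
| "sat S fo so (Neg \<phi>) = (\<not> sat S fo so \<phi>)"
| "sat S fo so (Conj \<phi> \<psi>) = (sat S fo so \<phi> \<and> sat S fo so \<psi>)"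
| "sat S fo so (ExFO x \<phi>) = (\<exists>u\<in>univ S. sat S (fo(x := u)) so \<phi>)"
| "sat S fo so (ExSO X \<phi>) = (\<exists>U. U \<subseteq> univ S \<and> sat S fo (so(X := U)) \<phi>)"

text \<open>An m x n matrix over 'f is given by m, n and A :: nat => nat => 'f
  (entries A i j for i < m, j < n; other values are irrelevant).
  Rows and columns are the distinct elements Row i and Col j.\<close>

datatype elt = Row nat | Col nat

definition rows :: "nat \<Rightarrow> elt set" where "rows m = Row ` {..<m}"
definition cols :: "nat \<Rightarrow> elt set" where "cols n = Col ` {..<n}"

definition matStruct :: "nat \<Rightarrow> nat \<Rightarrow> (nat \<Rightarrow> nat \<Rightarrow> 'f) \<Rightarrow> ('f, elt) sstruct" where
  "matStruct m n A = \<lparr> univ = rows m \<union> cols n, relR = rows m, relC = cols n,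
     relEntry = (\<lambda>a. {(Row i, Col j) | i j. i < m \<and> j < n \<and> A i j = a}) \<rparr>"

definition virtual_column :: "nat \<Rightarrow> ('f \<Rightarrow> elt set) \<Rightarrow> bool" where
  "virtual_column m Q \<longleftrightarrow>
     (\<forall>a b. a \<noteq> b \<longrightarrow> Q a \<inter> Q b = {}) \<and> (\<Union>a. Q a) = rows m"

definition vvec :: "('f \<Rightarrow> elt set) \<Rightarrow> nat \<Rightarrow> 'f" where
  "vvec Q i = (THE a. Row i \<in> Q a)"

definition colvec :: "(nat \<Rightarrow> nat \<Rightarrow> 'f::zero) \<Rightarrow> elt \<Rightarrow> nat \<Rightarrow> 'f" where
  "colvec A c i = (case c of Col j \<Rightarrow> A i j | Row _ \<Rightarrow> 0)"

definition in_span :: "nat \<Rightarrow> nat \<Rightarrow> (nat \<Rightarrow> nat \<Rightarrow> 'f::field) \<Rightarrow> (nat \<Rightarrow> 'f) \<Rightarrow> bool" where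
  "in_span m k vs w \<longleftrightarrow> (\<exists>\<beta>. \<forall>i<m. w i = (\<Sum>t<k. \<beta> t * vs t i))"

definition mdep :: "nat \<Rightarrow> (nat \<Rightarrow> nat \<Rightarrow> 'f::field) \<Rightarrow> nat \<Rightarrow> (nat \<Rightarrow> nat \<Rightarrow> 'f) \<Rightarrow> elt set \<Rightarrow> bool" where
  "mdep m A k vs U \<longleftrightarrow>
     (\<exists>c. (\<exists>u\<in>U. c u \<noteq> 0) \<and> in_span m k vs (\<lambda>i. \<Sum>u\<in>U. c u * colvec A u i))"

definition mcircuit :: "nat \<Rightarrow> nat \<Rightarrow> (nat \<Rightarrow> nat \<Rightarrow> 'f::field) \<Rightarrow> nat \<Rightarrow> (nat \<Rightarrow> nat \<Rightarrow> 'f)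
    \<Rightarrow> elt set \<Rightarrow> elt set \<Rightarrow> bool" where
  "mcircuit m n A k vs T D \<longleftrightarrow> D \<subseteq> T \<and> D \<subseteq> cols n \<and> mdep m A k vs D \<and>
     (\<forall>D'. D' \<subset> D \<longrightarrow> \<not> mdep m A k vs D')"

definition mconnected :: "nat \<Rightarrow> nat \<Rightarrow> (nat \<Rightarrow> nat \<Rightarrow> 'f::field) \<Rightarrow> nat \<Rightarrow> (nat \<Rightarrow> nat \<Rightarrow> 'f)
    \<Rightarrow> elt set \<Rightarrow> elt set \<Rightarrow> bool" where
  "mconnected m n A k vs T X \<longleftrightarrow>
     (\<forall>x\<in>X. \<forall>y\<in>X. x = y \<or> (\<exists>D. mcircuit m n A k vs T D \<and> x \<in> D \<and> y \<in> D))"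

definition conn_component :: "nat \<Rightarrow> nat \<Rightarrow> (nat \<Rightarrow> nat \<Rightarrow> 'f::field) \<Rightarrow> nat \<Rightarrow> (nat \<Rightarrow> nat \<Rightarrow> 'f)
    \<Rightarrow> elt set \<Rightarrow> elt set \<Rightarrow> bool" where
  "conn_component m n A k vs T S \<longleftrightarrow>
     S \<noteq> {} \<and> S \<subseteq> T \<and> mconnected m n A k vs T S \<and>
     (\<forall>S'. S \<subseteq> S' \<and> S' \<subseteq> T \<and> mconnected m n A k vs T S' \<longrightarrow> S' = S)"

text \<open>VX, VZ: the free variables X, Z; VY i a: component Y_{i+1,a} of the virtual
  column variable <Y_{i+1}>; VB j: further (bound) set variables.\<close>
datatype 'f ccvar = VX | VZ | VY nat 'f | VB nat

end

theory Submission
  imports Defs "HOL-Library.FuncSet"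
begin

text \<open>
  Everything reduces to expressing linear dependence in M(A, {v_1, ..., v_k}). A set U of
  columns is dependent iff some coefficient function c, nonzero somewhere on U, and some
  \<beta> \<in> F^k satisfy, for every row i,
  \<Sum>u\<in>U. c(u) A(i,u) = \<Sum>t<k. \<beta>_t v_t(i).
  The function c is guessed as |F| set variables partitioning the universe, \<beta> by a finite
  disjunction, and the value v_t(i) is read off from the virtual column Q_t. The left-hand side
  equals \<Sum>a,b. N_{a,b} a b, where N_{a,b} is the number of u \<in> U with c(u) = a and
  A(i,u) = b; as only N_{a,b} modulo the characteristic of F matters, it is determined by the
  predicates mod_{r,p}. Circuits are the minimal dependent subsets of T; connectivity and the
  maximality of a component then only need quantification over elements and sets.
\<close>

definition Top :: "('f, nat, 'v) cmso" where
  "Top = AtEq 0 0"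

definition Bot :: "('f, nat, 'v) cmso" where
  "Bot = Neg Top"

definition Disj :: "('f, 'x, 'v) cmso \<Rightarrow> ('f, 'x, 'v) cmso \<Rightarrow> ('f, 'x, 'v) cmso" where
  "Disj \<phi> \<psi> = Neg (Conj (Neg \<phi>) (Neg \<psi>))"

definition Imp :: "('f, 'x, 'v) cmso \<Rightarrow> ('f, 'x, 'v) cmso \<Rightarrow> ('f, 'x, 'v) cmso" where
  "Imp \<phi> \<psi> = Neg (Conj \<phi> (Neg \<psi>))"

definition Iff :: "('f, 'x, 'v) cmso \<Rightarrow> ('f, 'x, 'v) cmso \<Rightarrow> ('f, 'x, 'v) cmso" where
  "Iff \<phi> \<psi> = Conj (Imp \<phi> \<psi>) (Imp \<psi> \<phi>)"

definition AllFO :: "'x \<Rightarrow> ('f, 'x, 'v) cmso \<Rightarrow> ('f, 'x, 'v) cmso" where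
  "AllFO x \<phi> = Neg (ExFO x (Neg \<phi>))"

definition AllSO :: "'v \<Rightarrow> ('f, 'x, 'v) cmso \<Rightarrow> ('f, 'x, 'v) cmso" where
  "AllSO X \<phi> = Neg (ExSO X (Neg \<phi>))"

definition Subset :: "'v \<Rightarrow> 'v \<Rightarrow> ('f, nat, 'v) cmso" where
  "Subset X Y = AllFO 0 (Imp (AtMem 0 X) (AtMem 0 Y))"

definition enum_list :: "'a set \<Rightarrow> 'a list" where
  "enum_list X = (SOME xs. set xs = X \<and> distinct xs)"

lemma enum_list_spec: "finite X \<Longrightarrow> set (enum_list X) = X \<and> distinct (enum_list X)"
  unfolding enum_list_def by (rule someI_ex) (rule finite_distinct_list)

definition Ors :: "'a set \<Rightarrow> ('a \<Rightarrow> ('f, nat, 'v) cmso) \<Rightarrow> ('f, nat, 'v) cmso" where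
  "Ors X \<phi> = foldr (\<lambda>x. Disj (\<phi> x)) (enum_list X) Bot"

definition Ands :: "'a set \<Rightarrow> ('a \<Rightarrow> ('f, nat, 'v) cmso) \<Rightarrow> ('f, nat, 'v) cmso" where
  "Ands X \<phi> = foldr (\<lambda>x. Conj (\<phi> x)) (enum_list X) Top"

definition ExSOs :: "'v set \<Rightarrow> ('f, 'x, 'v) cmso \<Rightarrow> ('f, 'x, 'v) cmso" where
  "ExSOs Vs \<phi> = foldr ExSO (enum_list Vs) \<phi>"

lemma sat_Top [simp]: "sat S fo so Top"
  by (simp add: Top_def)

lemma sat_Bot [simp]: "\<not> sat S fo so Bot"
  by (simp add: Bot_def)

lemma sat_Disj [simp]: "sat S fo so (Disj \<phi> \<psi>) \<longleftrightarrow> sat S fo so \<phi> \<or> sat S fo so \<psi>"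
  by (simp add: Disj_def)

lemma sat_Imp [simp]: "sat S fo so (Imp \<phi> \<psi>) \<longleftrightarrow> (sat S fo so \<phi> \<longrightarrow> sat S fo so \<psi>)"
  by (simp add: Imp_def)

lemma sat_Iff [simp]: "sat S fo so (Iff \<phi> \<psi>) \<longleftrightarrow> (sat S fo so \<phi> \<longleftrightarrow> sat S fo so \<psi>)"
  by (auto simp add: Iff_def)

lemma sat_AllFO [simp]: "sat S fo so (AllFO x \<phi>) \<longleftrightarrow> (\<forall>u\<in>univ S. sat S (fo(x := u)) so \<phi>)"
  by (simp add: AllFO_def)

lemma sat_AllSO [simp]:
  "sat S fo so (AllSO X \<phi>) \<longleftrightarrow> (\<forall>U. U \<subseteq> univ S \<longrightarrow> sat S fo (so(X := U)) \<phi>)"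
  by (simp add: AllSO_def)

lemma sat_Subset [simp]: "so X \<subseteq> univ S \<Longrightarrow> sat S fo so (Subset X Y) \<longleftrightarrow> so X \<subseteq> so Y"
  by (auto simp add: Subset_def)

lemma sat_Ors [simp]: "finite X \<Longrightarrow> sat S fo so (Ors X \<phi>) \<longleftrightarrow> (\<exists>x\<in>X. sat S fo so (\<phi> x))"
proof -
  have "sat S fo so (foldr (\<lambda>x. Disj (\<phi> x)) xs Bot) \<longleftrightarrow> (\<exists>x\<in>set xs. sat S fo so (\<phi> x))" for xs
    by (induction xs) auto
  then show "finite X \<Longrightarrow> ?thesis"
    by (simp add: Ors_def enum_list_spec)
qed

lemma sat_Ands [simp]: "finite X \<Longrightarrow> sat S fo so (Ands X \<phi>) \<longleftrightarrow> (\<forall>x\<in>X. sat S fo so (\<phi> x))"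
proof -
  have "sat S fo so (foldr (\<lambda>x. Conj (\<phi> x)) xs Top) \<longleftrightarrow> (\<forall>x\<in>set xs. sat S fo so (\<phi> x))" for xs
    by (induction xs) auto
  then show "finite X \<Longrightarrow> ?thesis"
    by (simp add: Ands_def enum_list_spec)
qed

lemma sat_foldr_ExSO:
  "distinct Xs \<Longrightarrow> sat S fo so (foldr ExSO Xs \<phi>) \<longleftrightarrow>
     (\<exists>G. (\<forall>X\<in>set Xs. G X \<subseteq> univ S) \<and> sat S fo (override_on so G (set Xs)) \<phi>)"
proof (induction Xs arbitrary: so)
  case Nil
  then show ?case by simp
next
  case (Cons X Xs)
  have override: "override_on (so(X := U)) G (set Xs) = override_on so (G(X := U)) (set (X # Xs))"
    for G U using Cons.prems by (auto simp: override_on_def fun_eq_iff)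
  have IH: "sat S fo so' (foldr ExSO Xs \<phi>) \<longleftrightarrow>
      (\<exists>G. (\<forall>Y\<in>set Xs. G Y \<subseteq> univ S) \<and> sat S fo (override_on so' G (set Xs)) \<phi>)" for so'
    using Cons by simp
  show ?case
  proof
    assume "sat S fo so (foldr ExSO (X # Xs) \<phi>)"
    then obtain U where U: "U \<subseteq> univ S" "sat S fo (so(X := U)) (foldr ExSO Xs \<phi>)"
      by auto
    then obtain G where "\<forall>Y\<in>set Xs. G Y \<subseteq> univ S"
        "sat S fo (override_on (so(X := U)) G (set Xs)) \<phi>"
      unfolding IH by blast
    then show "\<exists>G. (\<forall>Y\<in>set (X # Xs). G Y \<subseteq> univ S) \<and> sat S fo (override_on so G (set (X # Xs))) \<phi>"
      using U(1) unfolding override by (intro exI[of _ "G(X := U)"]) auto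
  next
    assume "\<exists>G. (\<forall>Y\<in>set (X # Xs). G Y \<subseteq> univ S) \<and> sat S fo (override_on so G (set (X # Xs))) \<phi>"
    then obtain G where G: "\<forall>Y\<in>set (X # Xs). G Y \<subseteq> univ S"
        "sat S fo (override_on so G (set (X # Xs))) \<phi>"
      by blast
    have "override_on so G (set (X # Xs)) = override_on (so(X := G X)) G (set Xs)"
      by (simp only: override fun_upd_triv)
    then have "sat S fo (so(X := G X)) (foldr ExSO Xs \<phi>)"
      unfolding IH using G by auto
    then show "sat S fo so (foldr ExSO (X # Xs) \<phi>)"
      using G(1) by auto
  qed
qed

lemma sat_ExSOs:
  "finite Vs \<Longrightarrow> sat S fo so (ExSOs Vs \<phi>) \<longleftrightarrow>
     (\<exists>G. (\<forall>X\<in>Vs. G X \<subseteq> univ S) \<and> sat S fo (override_on so G Vs) \<phi>)"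
  using sat_foldr_ExSO[of "enum_list Vs"] by (simp add: ExSOs_def enum_list_spec)

lemma of_nat_mod_CHAR: "of_nat (n mod CHAR('a)) = (of_nat n :: 'a::semiring_1)"
proof -
  have "(of_nat n :: 'a) = of_nat (CHAR('a) * (n div CHAR('a)) + n mod CHAR('a))"
    by simp
  then show ?thesis
    by (simp only: of_nat_add of_nat_mult of_nat_CHAR) simp
qed

lemma sum_eq_sum_card_fibres_mod_CHAR:
  fixes f :: "'b::finite \<Rightarrow> 'a::semiring_1"
  assumes "finite U"
  shows "(\<Sum>u\<in>U. f (h u)) = (\<Sum>z\<in>UNIV. of_nat (card {u\<in>U. h u = z} mod CHAR('a)) * f z)"
proof -
  have "(\<Sum>u\<in>U. f (h u)) = (\<Sum>z\<in>UNIV. \<Sum>u\<in>{u\<in>U. h u = z}. f (h u))"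
    by (rule sum.group[symmetric]) (use assms in auto)
  also have "\<dots> = (\<Sum>z\<in>UNIV. \<Sum>u\<in>{u\<in>U. h u = z}. f z)"
    by (auto intro!: sum.cong)
  also have "\<dots> = (\<Sum>z\<in>UNIV. of_nat (card {u\<in>U. h u = z}) * f z)"
    by simp
  finally show ?thesis
    by (simp add: of_nat_mod_CHAR)
qed

lemma univ_matStruct [simp]: "univ (matStruct m n A) = rows m \<union> cols n"
  by (simp add: matStruct_def)

lemma relR_matStruct [simp]: "relR (matStruct m n A) = rows m"
  by (simp add: matStruct_def)

lemma relEntry_matStruct [simp]:
  "relEntry (matStruct m n A) b = {(Row i, Col j) | i j. i < m \<and> j < n \<and> A i j = b}"
  by (simp add: matStruct_def)

lemma vvec_eq_iff:
  assumes "virtual_column m Q" "i < m"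
  shows "vvec Q i = a \<longleftrightarrow> Row i \<in> Q a"
proof -
  have "Row i \<in> (\<Union>a. Q a)"
    using assms by (simp add: virtual_column_def rows_def)
  then obtain b where b: "Row i \<in> Q b"
    by blast
  then have unique: "Row i \<in> Q a \<longleftrightarrow> a = b" for a
    using assms(1) by (auto simp: virtual_column_def)
  then have "vvec Q i = b"
    by (simp add: vvec_def)
  then show ?thesis
    using unique by auto
qed

lemma in_span_iff_PiE:
  "in_span m k vs w \<longleftrightarrow> (\<exists>\<beta>\<in>{..<k} \<rightarrow>\<^sub>E UNIV. \<forall>i<m. w i = (\<Sum>t<k. \<beta> t * vs t i))"
proof
  assume "in_span m k vs w"
  then obtain \<beta> where "\<forall>i<m. w i = (\<Sum>t<k. \<beta> t * vs t i)"
    by (auto simp: in_span_def)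
  then show "\<exists>\<beta>\<in>{..<k} \<rightarrow>\<^sub>E UNIV. \<forall>i<m. w i = (\<Sum>t<k. \<beta> t * vs t i)"
    by (intro bexI[of _ "restrict \<beta> {..<k}"]) auto
qed (auto simp: in_span_def)

text \<open>
  Bound variable names are reused without renaming. This is sound because each formula below has
  no free variables besides its parameters, VZ and the VY t a, and the hypotheses of its sat lemma
  (x \<noteq> 1, U \<noteq> VB 0, ...) keep the parameters apart from the variables it binds. The spare
  virtual column VY k, not among the VY t with t < k, holds a guessed coefficient function.
\<close>

definition Count :: "nat \<Rightarrow> 'f ccvar \<Rightarrow> nat \<Rightarrow> 'f \<Rightarrow> 'f \<Rightarrow> nat \<Rightarrow> ('f::semiring_1, nat, 'f ccvar) cmso"
  where
  "Count k U x a b r = ExSO (VB 0) (Conj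
     (AllFO 1 (Iff (AtMem 1 (VB 0)) (Conj (AtMem 1 U) (Conj (AtMem 1 (VY k a)) (AtEntry b x 1)))))
     (ModP r CHAR('f) (VB 0)))"

lemma sat_Count:
  assumes "x \<noteq> 1" "U \<noteq> VB 0"
  shows "sat S fo so (Count k U x a b r :: ('f::semiring_1, nat, 'f ccvar) cmso) \<longleftrightarrow>
    card {u\<in>univ S. u \<in> so U \<and> u \<in> so (VY k a) \<and> (fo x, u) \<in> relEntry S b} mod CHAR('f)
      = r mod CHAR('f)"
proof -
  let ?W = "{u\<in>univ S. u \<in> so U \<and> u \<in> so (VY k a) \<and> (fo x, u) \<in> relEntry S b}"
  have "W = ?W" if "W \<subseteq> univ S"
    "\<forall>u\<in>univ S. u \<in> W \<longleftrightarrow> u \<in> so U \<and> u \<in> so (VY k a) \<and> (fo x, u) \<in> relEntry S b" for W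
    using that by blast
  then show ?thesis
    using assms by (auto simp: Count_def intro!: exI[of _ ?W])
qed

definition encodes_coeffs :: "('f, 'u) sstruct \<Rightarrow> nat \<Rightarrow> ('f ccvar \<Rightarrow> 'u set) \<Rightarrow> ('u \<Rightarrow> 'f) \<Rightarrow> bool"
  where "encodes_coeffs S k so c \<longleftrightarrow> (\<forall>u\<in>univ S. \<forall>a. u \<in> so (VY k a) \<longleftrightarrow> c u = a)"

definition ColCombVal :: "nat \<Rightarrow> 'f ccvar \<Rightarrow> nat \<Rightarrow> 'f \<Rightarrow> ('f::{finite,field}, nat, 'f ccvar) cmso"
  where
  "ColCombVal k U x e =
     Ors {r \<in> UNIV \<rightarrow>\<^sub>E {..<CHAR('f)}. (\<Sum>z\<in>UNIV. of_nat (r z) * (fst z * snd z)) = e}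
       (\<lambda>r. Ands UNIV (\<lambda>z. Count k U x (fst z) (snd z) (r z)))"

lemma sat_ColCombVal:
  fixes A :: "nat \<Rightarrow> nat \<Rightarrow> 'f::{finite,field}"
  assumes c: "encodes_coeffs (matStruct m n A) k so c"
    and U: "so U \<subseteq> cols n" "U \<noteq> VB 0"
    and x: "x \<noteq> 1" "fo x = Row i" "i < m"
  shows "sat (matStruct m n A) fo so (ColCombVal k U x e) \<longleftrightarrow> (\<Sum>u\<in>so U. c u * colvec A u i) = e"
proof -
  define N where "N z = card {u\<in>so U. (c u, colvec A u i) = z}" for z
  have fibre: "{u\<in>univ (matStruct m n A). u \<in> so U \<and> u \<in> so (VY k a) \<and>
      (Row i, u) \<in> relEntry (matStruct m n A) b} = {u\<in>so U. (c u, colvec A u i) = (a, b)}" for a b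
    using c U(1) x(3) by (fastforce simp: encodes_coeffs_def cols_def colvec_def)
  have char_pos: "CHAR('f) > 0"
    by (rule finite_imp_CHAR_pos) simp
  have "finite {r \<in> UNIV \<rightarrow>\<^sub>E {..<CHAR('f)}. P r}" for P :: "('f \<times> 'f \<Rightarrow> nat) \<Rightarrow> bool"
    by (rule finite_subset[of _ "UNIV \<rightarrow>\<^sub>E {..<CHAR('f)}"]) (auto intro: finite_PiE)
  then have "sat (matStruct m n A) fo so (ColCombVal k U x e) \<longleftrightarrow>
      (\<exists>r\<in>UNIV \<rightarrow>\<^sub>E {..<CHAR('f)}. (\<Sum>z\<in>UNIV. of_nat (r z) * (fst z * snd z)) = e \<and>
         (\<forall>z. N z mod CHAR('f) = r z mod CHAR('f)))"
    using U(2) x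
    by (simp add: ColCombVal_def sat_Count fibre N_def del: univ_matStruct relEntry_matStruct) blast
  also have "\<dots> \<longleftrightarrow> (\<Sum>z\<in>UNIV. of_nat (N z mod CHAR('f)) * (fst z * snd z)) = e"
  proof -
    have "(\<forall>z. N z mod CHAR('f) = r z mod CHAR('f)) \<longleftrightarrow> r = (\<lambda>z. N z mod CHAR('f))"
      if "r \<in> UNIV \<rightarrow>\<^sub>E {..<CHAR('f)}" for r
      using that by (auto simp: PiE_iff)
    then show ?thesis
      using char_pos by auto
  qed
  also have "(\<Sum>z\<in>UNIV. of_nat (N z mod CHAR('f)) * (fst z * snd z)) = (\<Sum>u\<in>so U. c u * colvec A u i)"
    using sum_eq_sum_card_fibres_mod_CHAR[of "so U" "\<lambda>z. fst z * snd z" "\<lambda>u. (c u, colvec A u i)"]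
      finite_subset[OF U(1)] by (simp add: N_def cols_def)
  finally show ?thesis .
qed

definition Partition :: "nat \<Rightarrow> ('f::finite, nat, 'f ccvar) cmso" where
  "Partition k = AllFO 0 (Ors UNIV (\<lambda>a. Ands UNIV (\<lambda>b.
     Iff (AtMem 0 (VY k b)) (if b = a then Top else Bot))))"

lemma sat_Partition: "sat S fo so (Partition k) \<longleftrightarrow> (\<exists>c. encodes_coeffs S k so c)"
proof -
  have "sat S fo so (Partition k) \<longleftrightarrow> (\<forall>u\<in>univ S. \<exists>a. \<forall>b. u \<in> so (VY k b) \<longleftrightarrow> b = a)"
    by (auto simp: Partition_def; blast)
  also have "\<dots> \<longleftrightarrow> (\<exists>c. \<forall>u\<in>univ S. \<forall>b. u \<in> so (VY k b) \<longleftrightarrow> b = c u)"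
    by (rule bchoice_iff)
  finally show ?thesis
    by (auto simp: encodes_coeffs_def)
qed

definition Nontriv :: "nat \<Rightarrow> 'f ccvar \<Rightarrow> ('f::zero, nat, 'f ccvar) cmso" where
  "Nontriv k U = ExFO 0 (Conj (AtMem 0 U) (Neg (AtMem 0 (VY k 0))))"

lemma sat_Nontriv:
  "encodes_coeffs S k so c \<Longrightarrow> so U \<subseteq> univ S \<Longrightarrow> sat S fo so (Nontriv k U) \<longleftrightarrow> (\<exists>u\<in>so U. c u \<noteq> 0)"
  by (auto simp: Nontriv_def encodes_coeffs_def)

lemma VB_notin_range_VY [simp]: "VB j \<notin> range (VY k)"
  by auto

locale virtual_matroid =
  fixes m n :: nat and A :: "nat \<Rightarrow> nat \<Rightarrow> 'f::{finite,field}" and k :: nat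
    and Q :: "nat \<Rightarrow> 'f \<Rightarrow> elt set" and T :: "elt set"
  assumes virtual_columns: "\<forall>t<k. virtual_column m (Q t)"
    and T_cols: "T \<subseteq> cols n"
begin

abbreviation SA :: "('f, elt) sstruct" where
  "SA \<equiv> matStruct m n A"

definition assigns_params :: "('f ccvar \<Rightarrow> elt set) \<Rightarrow> bool" where
  "assigns_params so \<longleftrightarrow> so VZ = T \<and> (\<forall>t<k. \<forall>a. so (VY t a) = Q t a)"

lemma assigns_params_upd_VB [simp]: "assigns_params (so(VB j := U)) = assigns_params so"
  by (simp add: assigns_params_def)

lemma assigns_params_override_VY [simp]:
  "assigns_params (override_on so G (range (VY k))) = assigns_params so"
  by (auto simp: assigns_params_def override_on_def)

end

definition VecCombVal :: "nat \<Rightarrow> (nat \<Rightarrow> 'f) \<Rightarrow> nat \<Rightarrow> 'f \<Rightarrow> ('f::{finite,field}, nat, 'f ccvar) cmso"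
  where
  "VecCombVal k \<beta> x e = Ors {\<gamma> \<in> {..<k} \<rightarrow>\<^sub>E UNIV. (\<Sum>t<k. \<beta> t * \<gamma> t) = e}
     (\<lambda>\<gamma>. Ands {..<k} (\<lambda>t. AtMem x (VY t (\<gamma> t))))"

lemma (in virtual_matroid) sat_VecCombVal:
  assumes so: "assigns_params so" and x: "fo x = Row i" "i < m"
  shows "sat SA fo so (VecCombVal k \<beta> x e) \<longleftrightarrow> (\<Sum>t<k. \<beta> t * vvec (Q t) i) = e"
proof -
  have "Row i \<in> so (VY t a) \<longleftrightarrow> vvec (Q t) i = a" if "t < k" for t a
    using vvec_eq_iff[of m "Q t" i a] that so virtual_columns x(2)
    by (auto simp: assigns_params_def)
  moreover have "finite {\<gamma> \<in> {..<k} \<rightarrow>\<^sub>E (UNIV :: 'f set). P \<gamma>}" for P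
    by (rule finite_subset[of _ "{..<k} \<rightarrow>\<^sub>E UNIV"]) (auto intro: finite_PiE)
  ultimately have "sat SA fo so (VecCombVal k \<beta> x e) \<longleftrightarrow>
      (\<exists>\<gamma>\<in>{..<k} \<rightarrow>\<^sub>E UNIV. (\<Sum>t<k. \<beta> t * \<gamma> t) = e \<and> (\<forall>t<k. vvec (Q t) i = \<gamma> t))"
    using x(1) by (simp add: VecCombVal_def) blast
  also have "\<dots> \<longleftrightarrow> (\<Sum>t<k. \<beta> t * vvec (Q t) i) = e"
    by (auto intro!: bexI[of _ "restrict (\<lambda>t. vvec (Q t) i) {..<k}"] split: if_splits)
  finally show ?thesis .
qed

definition RowEq :: "nat \<Rightarrow> (nat \<Rightarrow> 'f) \<Rightarrow> 'f ccvar \<Rightarrow> nat \<Rightarrow> ('f::{finite,field}, nat, 'f ccvar) cmso"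
  where "RowEq k \<beta> U x = Ors UNIV (\<lambda>e. Conj (ColCombVal k U x e) (VecCombVal k \<beta> x e))"

lemma (in virtual_matroid) sat_RowEq:
  assumes "assigns_params so" "encodes_coeffs SA k so c" "so U \<subseteq> cols n" "U \<noteq> VB 0"
    and "x \<noteq> 1" "fo x = Row i" "i < m"
  shows "sat SA fo so (RowEq k \<beta> U x) \<longleftrightarrow>
    (\<Sum>u\<in>so U. c u * colvec A u i) = (\<Sum>t<k. \<beta> t * vvec (Q t) i)"
  using assms by (simp add: RowEq_def sat_ColCombVal sat_VecCombVal) (rule eq_commute)

definition Span :: "nat \<Rightarrow> 'f ccvar \<Rightarrow> ('f::{finite,field}, nat, 'f ccvar) cmso" where
  "Span k U = Ors ({..<k} \<rightarrow>\<^sub>E UNIV) (\<lambda>\<beta>. AllFO 0 (Imp (AtR 0) (RowEq k \<beta> U 0)))"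

lemma (in virtual_matroid) sat_Span:
  assumes "assigns_params so" "encodes_coeffs SA k so c" "so U \<subseteq> cols n" "U \<noteq> VB 0"
  shows "sat SA fo so (Span k U) \<longleftrightarrow>
    in_span m k (\<lambda>t. vvec (Q t)) (\<lambda>i. \<Sum>u\<in>so U. c u * colvec A u i)"
proof -
  have rows: "(\<forall>u\<in>rows m \<union> cols n. u \<in> rows m \<longrightarrow> P u) \<longleftrightarrow> (\<forall>i<m. P (Row i))" for P
    by (auto simp: rows_def)
  show ?thesis
    using assms by (simp add: Span_def in_span_iff_PiE finite_PiE rows sat_RowEq)
qed

definition Dep :: "nat \<Rightarrow> 'f ccvar \<Rightarrow> ('f::{finite,field}, nat, 'f ccvar) cmso" where
  "Dep k U = ExSOs (range (VY k)) (Conj (Partition k) (Conj (Nontriv k U) (Span k U)))"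

lemma (in virtual_matroid) sat_Dep:
  assumes so: "assigns_params so" and U: "so U \<subseteq> cols n" "U \<noteq> VB 0" "U \<notin> range (VY k)"
  shows "sat SA fo so (Dep k U) \<longleftrightarrow> mdep m A k (\<lambda>t. vvec (Q t)) (so U)"
proof -
  let ?so = "\<lambda>G. override_on so G (range (VY k))"
  let ?dep = "\<lambda>c. (\<exists>u\<in>so U. c u \<noteq> 0) \<and>
    in_span m k (\<lambda>t. vvec (Q t)) (\<lambda>i. \<Sum>u\<in>so U. c u * colvec A u i)"
  have so_U: "?so G U = so U" for G
    using U(3) by (simp add: override_on_def)
  have body: "sat SA fo (?so G) (Conj (Partition k) (Conj (Nontriv k U) (Span k U))) \<longleftrightarrow>
      (\<exists>c. encodes_coeffs SA k (?so G) c \<and> ?dep c)" for G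
  proof -
    have "sat SA fo (?so G) (Conj (Nontriv k U) (Span k U)) \<longleftrightarrow> ?dep c"
      if "encodes_coeffs SA k (?so G) c" for c
      using sat_Nontriv[OF that, of U fo] sat_Span[OF _ that, of U fo] so U(1,2)
      unfolding so_U by (auto simp: cols_def)
    then show ?thesis
      by (auto simp: sat_Partition)
  qed
  have dep: "sat SA fo so (Dep k U) \<longleftrightarrow> (\<exists>G. (\<forall>V\<in>range (VY k). G V \<subseteq> rows m \<union> cols n) \<and>
      (\<exists>c. encodes_coeffs SA k (?so G) c \<and> ?dep c))"
    unfolding Dep_def body[symmetric] by (simp add: sat_ExSOs del: sat.simps)
  show ?thesis
  proof
    assume "sat SA fo so (Dep k U)"
    then show "mdep m A k (\<lambda>t. vvec (Q t)) (so U)"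
      unfolding dep mdep_def by blast
  next
    assume "mdep m A k (\<lambda>t. vvec (Q t)) (so U)"
    then obtain c where c: "?dep c"
      by (auto simp: mdep_def)
    define G where "G V = {u \<in> rows m \<union> cols n. V = VY k (c u)}" for V
    have "encodes_coeffs SA k (?so G) c"
      by (auto simp: encodes_coeffs_def G_def override_on_def)
    then show "sat SA fo so (Dep k U)"
      unfolding dep using c by (intro exI[of _ G]) (auto simp: G_def)
  qed
qed

definition Circ :: "nat \<Rightarrow> 'f ccvar \<Rightarrow> ('f::{finite,field}, nat, 'f ccvar) cmso" where
  "Circ k D = Conj (Subset D VZ) (Conj (Dep k D)
     (AllSO (VB 3) (Imp (Conj (Subset (VB 3) D) (Neg (Subset D (VB 3)))) (Neg (Dep k (VB 3))))))"

lemma (in virtual_matroid) sat_Circ: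
  assumes so: "assigns_params so" and D: "so (VB 2) \<subseteq> rows m \<union> cols n"
  shows "sat SA fo so (Circ k (VB 2)) \<longleftrightarrow> mcircuit m n A k (\<lambda>t. vvec (Q t)) T (so (VB 2))"
proof (cases "so (VB 2) \<subseteq> T")
  case False
  then show ?thesis
    using so D by (simp add: Circ_def mcircuit_def assigns_params_def)
next
  case True
  then have D_cols: "so (VB 2) \<subseteq> cols n"
    using T_cols by blast
  have dep: "sat SA fo (so(VB 3 := D')) (Dep k (VB 3)) \<longleftrightarrow> mdep m A k (\<lambda>t. vvec (Q t)) D'"
    if "D' \<subseteq> so (VB 2)" for D'
    using sat_Dep[of "so(VB 3 := D')" "VB 3"] so that D_cols by auto
  have "sat SA fo so (Circ k (VB 2)) \<longleftrightarrow> mdep m A k (\<lambda>t. vvec (Q t)) (so (VB 2)) \<and>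
      (\<forall>D'\<subseteq>rows m \<union> cols n. D' \<subseteq> so (VB 2) \<and> \<not> so (VB 2) \<subseteq> D' \<longrightarrow>
         \<not> mdep m A k (\<lambda>t. vvec (Q t)) D')"
    using True D so sat_Dep[OF so D_cols] by (simp add: Circ_def assigns_params_def dep)
  also have "\<dots> \<longleftrightarrow> mcircuit m n A k (\<lambda>t. vvec (Q t)) T (so (VB 2))"
    using True D D_cols unfolding mcircuit_def psubset_eq by blast
  finally show ?thesis .
qed

definition Conn :: "nat \<Rightarrow> 'f ccvar \<Rightarrow> ('f::{finite,field}, nat, 'f ccvar) cmso" where
  "Conn k X = AllFO 0 (AllFO 1 (Imp (Conj (AtMem 0 X) (AtMem 1 X)) (Disj (AtEq 0 1)
     (ExSO (VB 2) (Conj (Circ k (VB 2)) (Conj (AtMem 0 (VB 2)) (AtMem 1 (VB 2))))))))"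

lemma (in virtual_matroid) sat_Conn:
  assumes so: "assigns_params so" and X: "X \<noteq> VB 2" "so X \<subseteq> rows m \<union> cols n"
  shows "sat SA fo so (Conn k X) \<longleftrightarrow> mconnected m n A k (\<lambda>t. vvec (Q t)) T (so X)"
proof -
  have circuit: "(\<exists>D\<subseteq>rows m \<union> cols n. sat SA fo' (so(VB 2 := D)) (Circ k (VB 2)) \<and> x \<in> D \<and> y \<in> D)
      \<longleftrightarrow> (\<exists>D. mcircuit m n A k (\<lambda>t. vvec (Q t)) T D \<and> x \<in> D \<and> y \<in> D)" for fo' x y
  proof -
    have "sat SA fo' (so(VB 2 := D)) (Circ k (VB 2)) \<longleftrightarrow> mcircuit m n A k (\<lambda>t. vvec (Q t)) T D"
      if "D \<subseteq> rows m \<union> cols n" for D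
      using sat_Circ[of "so(VB 2 := D)" fo'] so that by simp
    moreover have "mcircuit m n A k (\<lambda>t. vvec (Q t)) T D \<Longrightarrow> D \<subseteq> rows m \<union> cols n" for D
      by (auto simp: mcircuit_def)
    ultimately show ?thesis
      by blast
  qed
  have "sat SA fo so (Conn k X) \<longleftrightarrow> (\<forall>x\<in>rows m \<union> cols n. \<forall>y\<in>rows m \<union> cols n.
      x \<in> so X \<and> y \<in> so X \<longrightarrow> x = y \<or> (\<exists>D. mcircuit m n A k (\<lambda>t. vvec (Q t)) T D \<and> x \<in> D \<and> y \<in> D))"
    using X(1) by (simp add: Conn_def circuit)
  also have "\<dots> \<longleftrightarrow> mconnected m n A k (\<lambda>t. vvec (Q t)) T (so X)"
    using X(2) by (auto simp: mconnected_def)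
  finally show ?thesis .
qed

definition CC :: "nat \<Rightarrow> ('f::{finite,field}, nat, 'f ccvar) cmso" where
  "CC k = Conj (ExFO 0 (AtMem 0 VX)) (Conj (Subset VX VZ) (Conj (Conn k VX)
     (AllSO (VB 1) (Imp (Conj (Subset VX (VB 1)) (Conj (Subset (VB 1) VZ) (Conn k (VB 1))))
        (Subset (VB 1) VX)))))"

lemma (in virtual_matroid) sat_CC:
  assumes so: "assigns_params so" and S: "so VX = S" "S \<subseteq> T"
  shows "sat SA fo so (CC k) \<longleftrightarrow> conn_component m n A k (\<lambda>t. vvec (Q t)) T S"
proof -
  have T: "T \<subseteq> rows m \<union> cols n"
    using T_cols by blast
  have S_univ: "S \<subseteq> rows m \<union> cols n"
    using S(2) T by blast
  have nonempty: "(\<exists>u\<in>rows m \<union> cols n. u \<in> S) \<longleftrightarrow> S \<noteq> {}"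
    using S_univ by blast
  have conn: "sat SA fo (so(VB 1 := S')) (Conn k (VB 1)) \<longleftrightarrow> mconnected m n A k (\<lambda>t. vvec (Q t)) T S'"
    if "S' \<subseteq> rows m \<union> cols n" for S'
    using sat_Conn[of "so(VB 1 := S')" "VB 1"] so that by simp
  have "sat SA fo so (CC k) \<longleftrightarrow> S \<noteq> {} \<and> mconnected m n A k (\<lambda>t. vvec (Q t)) T S \<and>
      (\<forall>S'\<subseteq>rows m \<union> cols n. S \<subseteq> S' \<and> S' \<subseteq> T \<and> mconnected m n A k (\<lambda>t. vvec (Q t)) T S'
         \<longrightarrow> S' \<subseteq> S)"
    \<comment> \<open>the simplifier turns VB 1 into VB (Suc 0), hence conn[simplified]\<close>
    using so S S_univ sat_Conn[of so VX] conn[simplified]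
    by (simp add: CC_def assigns_params_def nonempty)
  also have "\<dots> \<longleftrightarrow> conn_component m n A k (\<lambda>t. vvec (Q t)) T S"
    using S(2) T unfolding conn_component_def by (metis subset_antisym subset_trans)
  finally show ?thesis .
qed

theorem lemma10:
  fixes k :: nat
  shows "\<exists>\<phi> :: ('f::{finite,field}, nat, 'f ccvar) cmso.
    \<forall>(m::nat) (n::nat) (A :: nat \<Rightarrow> nat \<Rightarrow> 'f) (S :: elt set) (T :: elt set)
      (Q :: nat \<Rightarrow> 'f \<Rightarrow> elt set) (fo :: nat \<Rightarrow> elt) (so :: 'f ccvar \<Rightarrow> elt set).
      S \<subseteq> T \<longrightarrow> T \<subseteq> cols n \<longrightarrow> (\<forall>i<k. virtual_column m (Q i)) \<longrightarrow>
      so VX = S \<longrightarrow> so VZ = T \<longrightarrow> (\<forall>i<k. \<forall>a. so (VY i a) = Q i a) \<longrightarrow>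
      (sat (matStruct m n A) fo so \<phi> \<longleftrightarrow>
         conn_component m n A k (\<lambda>i. vvec (Q i)) T S)"
proof -
  have "sat (matStruct m n A) fo so (CC k) \<longleftrightarrow> conn_component m n A k (\<lambda>i. vvec (Q i)) T S"
    if "S \<subseteq> T" "T \<subseteq> cols n" "\<forall>i<k. virtual_column m (Q i)"
      "so VX = S" "so VZ = T" "\<forall>i<k. \<forall>a. so (VY i a) = Q i a"
    for m n and A :: "nat \<Rightarrow> nat \<Rightarrow> 'f" and S T Q fo so
  proof -
    interpret virtual_matroid m n A k Q T
      using that by unfold_locales
    show ?thesis
      using that by (intro sat_CC) (auto simp: assigns_params_def)
  qed
  then show ?thesis
    by blast
qed

end
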